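(* Let $P\in\mathbb{C}[X_1,\dots,X_n]_{int}$ be an internal polynomial of degree $d\in{}^*\mathbb{N}$. Then (i) $P$ is bounded if and only if $P$ is absolutely bounded; (ii) $P$ is infinitesimal if and only if $P$ is absolutely infinitesimal.
   Context: ${}^*\mathbb{C}$ is an ultrapower of $\mathbb{C}$ by a nonprincipal ultrafilter; ${}^b\mathbb{C}$ (resp. ${}^i\mathbb{C}$) denotes the elements $z$ with $|z|\le r$ for some standard real $r$ (resp. $|z|<r$ for every standard real $r>0$). For finite $n$, $\mathbb{C}[X_1,\dots,X_n]_{int}$ is the ultrapower of $\mathbb{C}[X_1,\dots,X_n]$; an internal polynomial $P=\sum_{|\nu|\le d}a_\nu X^\nu$ ($a_\nu\in{}^*\mathbb{C}$, $\nu\in{}^*\mathbb{N}^n$) is viewed as an internal function ${}^*\mathbb{C}^n\to{}^*\mathbb{C}$, and $|P|:=\sum_{|\nu|\le d}|a_\nu|X^\nu$. $P$ is bounded (resp. infinitesimal) if $P({}^b\mathbb{C}^n)\subset{}^b\mathbb{C}$ (resp. $\subset{}^i\mathbb{C}$), and absolutely bounded (resp. absolutely infinitesimal) if $|P|({}^b\mathbb{C}^n)\subset{}^b\mathbb{C}$ (resp. $\subset{}^i\mathbb{C}$). *)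

theory Defs
  imports Complex_Main
begin

text \<open>The ultrapower is modelled concretely: an element of the ultrapower of X by an
ultrafilter U on an index type 'i is represented by a family 'i => X; all predicates
below are invariant under U-almost-everywhere equality.\<close>

definition is_ultrafilter :: "'i filter \<Rightarrow> bool" where
  "is_ultrafilter U \<longleftrightarrow> U \<noteq> bot \<and> (\<forall>P. eventually P U \<or> eventually (\<lambda>i. \<not> P i) U)"

definition nonprincipal :: "'i filter \<Rightarrow> bool" where
  "nonprincipal U \<longleftrightarrow> (\<forall>x. \<not> eventually (\<lambda>i. i = x) U)"

definition ibounded :: "'i filter \<Rightarrow> ('i \<Rightarrow> complex) \<Rightarrow> bool" where
  "ibounded U z \<longleftrightarrow> (\<exists>r::real. eventually (\<lambda>i. norm (z i) \<le> r) U)"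

definition iinfinitesimal :: "'i filter \<Rightarrow> ('i \<Rightarrow> complex) \<Rightarrow> bool" where
  "iinfinitesimal U z \<longleftrightarrow> (\<forall>r::real. r > 0 \<longrightarrow> eventually (\<lambda>i. norm (z i) < r) U)"

text \<open>Multi-indices nu in N^n of total degree at most d (as functions nat => nat vanishing
from n on).\<close>
definition multi_idx :: "nat \<Rightarrow> nat \<Rightarrow> (nat \<Rightarrow> nat) set" where
  "multi_idx n d = {\<nu>. (\<forall>k\<ge>n. \<nu> k = 0) \<and> (\<Sum>k<n. \<nu> k) \<le> d}"

definition peval :: "nat \<Rightarrow> nat \<Rightarrow> ((nat \<Rightarrow> nat) \<Rightarrow> complex) \<Rightarrow> (nat \<Rightarrow> complex) \<Rightarrow> complex" where
  "peval n d c x = (\<Sum>\<nu>\<in>multi_idx n d. c \<nu> * (\<Prod>k<n. x k ^ \<nu> k))"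

text \<open>An internal polynomial in n variables is given by a family of degrees d i and
coefficient functions a i; |P| has coefficients |a_nu|.\<close>
definition abs_coeffs :: "((nat \<Rightarrow> nat) \<Rightarrow> complex) \<Rightarrow> ((nat \<Rightarrow> nat) \<Rightarrow> complex)" where
  "abs_coeffs c = (\<lambda>\<nu>. complex_of_real (norm (c \<nu>)))"

definition ipoly_bounded :: "'i filter \<Rightarrow> nat \<Rightarrow> ('i \<Rightarrow> nat) \<Rightarrow> ('i \<Rightarrow> (nat \<Rightarrow> nat) \<Rightarrow> complex) \<Rightarrow> bool" where
  "ipoly_bounded U n d a \<longleftrightarrow>
     (\<forall>z :: 'i \<Rightarrow> nat \<Rightarrow> complex. (\<forall>k<n. ibounded U (\<lambda>i. z i k)) \<longrightarrow>
        ibounded U (\<lambda>i. peval n (d i) (a i) (z i)))"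

definition ipoly_infinitesimal :: "'i filter \<Rightarrow> nat \<Rightarrow> ('i \<Rightarrow> nat) \<Rightarrow> ('i \<Rightarrow> (nat \<Rightarrow> nat) \<Rightarrow> complex) \<Rightarrow> bool" where
  "ipoly_infinitesimal U n d a \<longleftrightarrow>
     (\<forall>z :: 'i \<Rightarrow> nat \<Rightarrow> complex. (\<forall>k<n. ibounded U (\<lambda>i. z i k)) \<longrightarrow>
        iinfinitesimal U (\<lambda>i. peval n (d i) (a i) (z i)))"

definition ipoly_abs_bounded where
  "ipoly_abs_bounded U n d a \<longleftrightarrow> ipoly_bounded U n d (\<lambda>i. abs_coeffs (a i))"

definition ipoly_abs_infinitesimal where
  "ipoly_abs_infinitesimal U n d a \<longleftrightarrow> ipoly_infinitesimal U n d (\<lambda>i. abs_coeffs (a i))"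

end

theory Submission
  imports Defs "HOL-Library.FuncSet"
begin

text \<open>For a standard polynomial P of degree at most d in n variables, the discrete Cauchy
  formula on the grid of (d+1)-st roots of unity of radius 2 rho bounds every coefficient by
  |c_nu| (2 rho)^|nu| <= max |P| on the grid. Summing the resulting geometric factors 2^-|nu| gives
  |P|(z) <= 2^n |P(x)| on the polydisc of radius rho, for a grid point x of modulus 2 rho. The
  constant 2^n does not depend on the degree, so the estimate survives the passage to internal
  polynomials of hyperfinite degree. The converse direction is the triangle inequality
  |P(z)| <= |P|(|z|).\<close>

definition unit_root :: "nat \<Rightarrow> complex" where
  "unit_root N = cis (2 * pi / real N)"

lemma norm_unit_root [simp]: "norm (unit_root N) = 1"
  by (simp add: unit_root_def)

lemma unit_root_orthogonality:
  assumes "m < N" "l < N"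
  shows "(\<Sum>t<N. (unit_root N ^ m * cnj (unit_root N) ^ l) ^ t) = (if m = l then of_nat N else 0)"
proof -
  define x where "x = (real m - real l) / real N"
  have N: "N > 0" using assms by simp
  have q: "unit_root N ^ m * cnj (unit_root N) ^ l = cis (2 * pi * x)"
    by (simp add: unit_root_def x_def DeMoivre cis_cnj cis_mult diff_divide_distrib algebra_simps)
  have "cis (2 * pi * x) ^ N = cis (2 * pi * of_int (int m - int l))"
    using N by (simp add: x_def DeMoivre)
  also have "\<dots> = 1" by (rule cis_multiple_2pi) simp
  finally have qN: "cis (2 * pi * x) ^ N = 1" .
  show ?thesis
  proof (cases "m = l")
    case False
    have "cis (2 * pi * x) \<noteq> 1"
    proof
      assume "cis (2 * pi * x) = 1"
      then have "cos (2 * pi * x) = 1" by (simp add: complex_eq_iff)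
      then obtain k :: int where "2 * pi * x = of_int k * (2 * pi)"
        by (auto simp: cos_one_2pi_int)
      then have "x = of_int k" by simp
      then have "real_of_int (int m - int l) = real_of_int (k * int N)"
        using N by (simp add: x_def field_simps)
      then have k: "int m - int l = k * int N" by (simp only: of_int_eq_iff)
      moreover have "\<bar>int m - int l\<bar> < int N" using assms by linarith
      ultimately have "\<bar>k\<bar> < 1" by (simp add: abs_mult mult_less_cancel_right2)
      then have "k = 0" by simp
      with k False show False by simp
    qed
    with False qN show ?thesis by (simp add: q sum_gp_strict)
  next
    case True
    then have "cis (2 * pi * x) = 1" by (simp add: x_def)
    then show ?thesis unfolding q using True by simp
  qed
qed

definition zero_ext :: "nat \<Rightarrow> (nat \<Rightarrow> nat) \<Rightarrow> nat \<Rightarrow> nat" where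
  "zero_ext n g = (\<lambda>k. if k < n then g k else 0)"

lemma inj_on_zero_ext: "inj_on (zero_ext n) (PiE {..<n} B)"
  unfolding inj_on_def zero_ext_def PiE_def extensional_def
  by (auto simp: fun_eq_iff) metis

lemma multi_idx_component_le: "\<nu> \<in> multi_idx n d \<Longrightarrow> k < n \<Longrightarrow> \<nu> k \<le> d"
  unfolding multi_idx_def using member_le_sum[of k "{..<n}" \<nu>] by auto

lemma multi_idx_eqI:
  assumes "\<mu> \<in> multi_idx n d" "\<nu> \<in> multi_idx n d" "\<And>k. k < n \<Longrightarrow> \<mu> k = \<nu> k"
  shows "\<mu> = \<nu>"
proof
  show "\<mu> k = \<nu> k" for k
    using assms unfolding multi_idx_def by (cases "k < n") auto
qed

lemma zero_in_multi_idx: "(\<lambda>_. 0) \<in> multi_idx n d"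
  unfolding multi_idx_def by simp

lemma multi_idx_subset_zero_ext: "multi_idx n d \<subseteq> zero_ext n ` PiE {..<n} (\<lambda>_. {..d})"
proof
  fix \<nu> assume \<nu>: "\<nu> \<in> multi_idx n d"
  have "\<nu> = zero_ext n (restrict \<nu> {..<n})"
    using \<nu> unfolding zero_ext_def multi_idx_def by (auto simp: fun_eq_iff)
  moreover have "restrict \<nu> {..<n} \<in> PiE {..<n} (\<lambda>_. {..d})"
    using multi_idx_component_le[OF \<nu>] by auto
  ultimately show "\<nu> \<in> zero_ext n ` PiE {..<n} (\<lambda>_. {..d})" by blast
qed

lemma finite_multi_idx [simp]: "finite (multi_idx n d)"
  by (rule finite_subset[OF multi_idx_subset_zero_ext]) (auto intro: finite_PiE)

lemma sum_multi_idx_prod_le: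
  fixes f :: "nat \<Rightarrow> nat \<Rightarrow> real"
  assumes "\<And>k t. f k t \<ge> 0"
  shows "(\<Sum>\<nu>\<in>multi_idx n d. \<Prod>k<n. f k (\<nu> k)) \<le> (\<Prod>k<n. \<Sum>t\<le>d. f k t)"
proof -
  let ?B = "PiE {..<n} (\<lambda>_. {..d})"
  have "(\<Sum>\<nu>\<in>multi_idx n d. \<Prod>k<n. f k (\<nu> k)) \<le> (\<Sum>\<nu>\<in>zero_ext n ` ?B. \<Prod>k<n. f k (\<nu> k))"
    by (intro sum_mono2 multi_idx_subset_zero_ext prod_nonneg assms) (auto intro: finite_PiE)
  also have "\<dots> = (\<Sum>g\<in>?B. \<Prod>k<n. f k (zero_ext n g k))"
    by (rule sum.reindex[OF inj_on_zero_ext, unfolded comp_def])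
  also have "\<dots> = (\<Sum>g\<in>?B. \<Prod>k<n. f k (g k))"
    unfolding zero_ext_def by (intro sum.cong prod.cong refl) auto
  also have "\<dots> = (\<Prod>k<n. \<Sum>t\<le>d. f k t)"
    by (rule prod_sum_PiE[symmetric]) auto
  finally show ?thesis .
qed

lemma norm_peval_le:
  "norm (peval n d c z) \<le> (\<Sum>\<nu>\<in>multi_idx n d. norm (c \<nu>) * (\<Prod>k<n. norm (z k) ^ \<nu> k))"
  unfolding peval_def
  by (rule order_trans[OF norm_sum]) (simp add: norm_mult prod_norm[symmetric] norm_power)

lemma norm_peval_le_abs_peval:
  "norm (peval n d c z) \<le> norm (peval n d (abs_coeffs c) (\<lambda>k. of_real (norm (z k))))"
proof -
  have abs_peval: "peval n d (abs_coeffs c) (\<lambda>k. of_real (norm (z k))) =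
        of_real (\<Sum>\<nu>\<in>multi_idx n d. norm (c \<nu>) * (\<Prod>k<n. norm (z k) ^ \<nu> k))"
    unfolding peval_def abs_coeffs_def by simp
  have "(\<Sum>\<nu>\<in>multi_idx n d. norm (c \<nu>) * (\<Prod>k<n. norm (z k) ^ \<nu> k)) \<ge> 0"
    by (intro sum_nonneg mult_nonneg_nonneg prod_nonneg) auto
  then show ?thesis
    using norm_peval_le[of n d c z] by (simp only: abs_peval norm_of_real abs_of_nonneg)
qed

text \<open>Discrete Cauchy formula: averaging P against a character over the grid of
  (d+1)-st roots of unity of radius R isolates a single coefficient.\<close>
lemma sum_peval_torus_grid:
  fixes c :: "(nat \<Rightarrow> nat) \<Rightarrow> complex"
  assumes \<nu>: "\<nu> \<in> multi_idx n d"
  defines "w \<equiv> unit_root (Suc d)"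
  shows "(\<Sum>g\<in>PiE {..<n} (\<lambda>_. {..<Suc d}).
            peval n d c (\<lambda>k. of_real R * w ^ g k) * (\<Prod>k<n. cnj w ^ (\<nu> k * g k)))
         = of_nat (Suc d) ^ n * c \<nu> * of_real R ^ (\<Sum>k<n. \<nu> k)"
proof -
  let ?M = "multi_idx n d" and ?G = "PiE {..<n} (\<lambda>_. {..<Suc d})"
  let ?e = "\<lambda>\<mu> k. w ^ \<mu> k * cnj w ^ \<nu> k"
  have monomial: "(of_real R * w ^ t) ^ m * cnj w ^ (l * t) = of_real R ^ m * (w ^ m * cnj w ^ l) ^ t"
    for t m l :: nat
    by (simp add: power_mult_distrib power_mult[symmetric] mult.commute mult.left_commute)
  have orth: "(\<Sum>t<Suc d. ?e \<mu> k ^ t) = (if \<mu> k = \<nu> k then of_nat (Suc d) else 0)"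
    if "\<mu> \<in> ?M" "k < n" for \<mu> k
    unfolding w_def using that \<nu>
    by (intro unit_root_orthogonality) (auto simp: less_Suc_eq_le multi_idx_component_le)
  have "(\<Sum>g\<in>?G. peval n d c (\<lambda>k. of_real R * w ^ g k) * (\<Prod>k<n. cnj w ^ (\<nu> k * g k)))
      = (\<Sum>g\<in>?G. \<Sum>\<mu>\<in>?M. c \<mu> * (\<Prod>k<n. of_real R ^ \<mu> k * ?e \<mu> k ^ g k))"
    unfolding peval_def sum_distrib_right
    by (intro sum.cong refl) (simp add: mult.assoc prod.distrib[symmetric] monomial)
  also have "\<dots> = (\<Sum>\<mu>\<in>?M. c \<mu> * (\<Sum>g\<in>?G. \<Prod>k<n. of_real R ^ \<mu> k * ?e \<mu> k ^ g k))"
    by (subst sum.swap) (simp add: sum_distrib_left)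
  also have "\<dots> = (\<Sum>\<mu>\<in>?M. c \<mu> * (\<Prod>k<n. \<Sum>t<Suc d. of_real R ^ \<mu> k * ?e \<mu> k ^ t))"
    by (subst prod_sum_PiE) auto
  also have "\<dots> = (\<Sum>\<mu>\<in>?M. c \<mu> * (\<Prod>k<n. of_real R ^ \<mu> k * (if \<mu> k = \<nu> k then of_nat (Suc d) else 0)))"
    by (intro sum.cong prod.cong refl arg_cong2[where f = "(*)"])
       (simp add: sum_distrib_left[symmetric] orth del: sum.lessThan_Suc)
  also have "\<dots> = (\<Sum>\<mu>\<in>?M. if \<mu> = \<nu> then c \<nu> * (\<Prod>k<n. of_real R ^ \<nu> k * of_nat (Suc d)) else 0)"
  proof (intro sum.cong refl)
    fix \<mu> assume \<mu>: "\<mu> \<in> ?M"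
    show "c \<mu> * (\<Prod>k<n. of_real R ^ \<mu> k * (if \<mu> k = \<nu> k then of_nat (Suc d) else 0)) =
          (if \<mu> = \<nu> then c \<nu> * (\<Prod>k<n. of_real R ^ \<nu> k * of_nat (Suc d)) else 0)"
      using multi_idx_eqI[OF \<mu> \<nu>] by (auto intro!: prod_zero)
  qed
  also have "\<dots> = of_nat (Suc d) ^ n * c \<nu> * of_real R ^ (\<Sum>k<n. \<nu> k)"
    using \<nu> by (simp add: prod.distrib power_sum)
  finally show ?thesis .
qed

lemma norm_coeff_le_torus_grid_bound:
  fixes c :: "(nat \<Rightarrow> nat) \<Rightarrow> complex"
  assumes "R \<ge> 0" and \<nu>: "\<nu> \<in> multi_idx n d"
    and bound: "\<And>g. g \<in> PiE {..<n} (\<lambda>_. {..<Suc d}) \<Longrightarrow>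
                  norm (peval n d c (\<lambda>k. of_real R * unit_root (Suc d) ^ g k)) \<le> M"
  shows "norm (c \<nu>) * R ^ (\<Sum>k<n. \<nu> k) \<le> M"
proof -
  let ?G = "PiE {..<n} (\<lambda>_. {..<Suc d})" and ?w = "unit_root (Suc d)"
  let ?P = "\<lambda>g. peval n d c (\<lambda>k. of_real R * ?w ^ g k)"
  have "real (Suc d) ^ n * (norm (c \<nu>) * R ^ (\<Sum>k<n. \<nu> k))
      = norm (\<Sum>g\<in>?G. ?P g * (\<Prod>k<n. cnj ?w ^ (\<nu> k * g k)))"
    using \<open>R \<ge> 0\<close> by (simp add: sum_peval_torus_grid[OF \<nu>] norm_mult norm_power del: of_nat_Suc)
  also have "\<dots> \<le> (\<Sum>g\<in>?G. norm (?P g * (\<Prod>k<n. cnj ?w ^ (\<nu> k * g k))))"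
    by (rule norm_sum)
  also have "\<dots> = (\<Sum>g\<in>?G. norm (?P g))"
    by (simp add: norm_mult prod_norm[symmetric] norm_power)
  also have "\<dots> \<le> (\<Sum>g\<in>?G. M)"
    by (intro sum_mono bound)
  also have "\<dots> = real (Suc d) ^ n * M"
    by (simp add: card_PiE)
  finally show ?thesis by simp
qed

lemma sum_multi_idx_half_powers_le: "(\<Sum>\<nu>\<in>multi_idx n d. \<Prod>k<n. (1/2::real) ^ \<nu> k) \<le> 2 ^ n"
proof -
  have geometric: "(\<Sum>t\<le>d. (1/2::real) ^ t) = 2 - (1/2) ^ d"
    by (induction d) (auto simp: field_simps)
  have "(\<Sum>\<nu>\<in>multi_idx n d. \<Prod>k<n. (1/2::real) ^ \<nu> k) \<le> (\<Prod>k<n. \<Sum>t\<le>d. (1/2::real) ^ t)"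
    by (rule sum_multi_idx_prod_le) simp
  also have "\<dots> \<le> (\<Prod>k<n. 2)"
    by (intro prod_mono conjI sum_nonneg) (auto simp: geometric)
  finally show ?thesis by simp
qed

lemma norm_abs_peval_le:
  fixes c :: "(nat \<Rightarrow> nat) \<Rightarrow> complex"
  assumes coeff: "\<And>\<nu>. \<nu> \<in> multi_idx n d \<Longrightarrow> norm (c \<nu>) * (2 * r) ^ (\<Sum>k<n. \<nu> k) \<le> M"
    and z: "\<And>k. k < n \<Longrightarrow> norm (z k) \<le> r"
  shows "norm (peval n d (abs_coeffs c) z) \<le> 2 ^ n * M"
proof -
  have "norm (c (\<lambda>_. 0)) \<le> M" using coeff[OF zero_in_multi_idx] by simp
  then have "M \<ge> 0" by (rule order_trans[OF norm_ge_zero])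
  have "norm (peval n d (abs_coeffs c) z)
      \<le> (\<Sum>\<nu>\<in>multi_idx n d. norm (c \<nu>) * (\<Prod>k<n. norm (z k) ^ \<nu> k))"
    using norm_peval_le[of n d "abs_coeffs c" z] by (simp add: abs_coeffs_def)
  also have "\<dots> \<le> (\<Sum>\<nu>\<in>multi_idx n d. M * (\<Prod>k<n. (1/2) ^ \<nu> k))"
  proof (rule sum_mono)
    fix \<nu> assume \<nu>: "\<nu> \<in> multi_idx n d"
    have "(\<Prod>k<n. norm (z k) ^ \<nu> k) \<le> (\<Prod>k<n. r ^ \<nu> k)"
      by (intro prod_mono conjI power_mono z) auto
    also have "\<dots> = (\<Prod>k<n. (2 * r) ^ \<nu> k * (1/2) ^ \<nu> k)"
      by (intro prod.cong refl) (subst power_mult_distrib[symmetric], simp)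
    also have "\<dots> = (2 * r) ^ (\<Sum>k<n. \<nu> k) * (\<Prod>k<n. (1/2) ^ \<nu> k)"
      by (simp only: prod.distrib power_sum)
    finally have "norm (c \<nu>) * (\<Prod>k<n. norm (z k) ^ \<nu> k)
        \<le> (norm (c \<nu>) * (2 * r) ^ (\<Sum>k<n. \<nu> k)) * (\<Prod>k<n. (1/2) ^ \<nu> k)"
      by (simp add: mult_left_mono mult.assoc)
    also have "\<dots> \<le> M * (\<Prod>k<n. (1/2) ^ \<nu> k)"
      by (intro mult_right_mono coeff \<nu> prod_nonneg) auto
    finally show "norm (c \<nu>) * (\<Prod>k<n. norm (z k) ^ \<nu> k) \<le> M * (\<Prod>k<n. (1/2) ^ \<nu> k)" .
  qed
  also have "\<dots> = M * (\<Sum>\<nu>\<in>multi_idx n d. \<Prod>k<n. (1/2::real) ^ \<nu> k)"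
    by (simp add: sum_distrib_left)
  also have "\<dots> \<le> M * 2 ^ n"
    by (intro mult_left_mono \<open>M \<ge> 0\<close> sum_multi_idx_half_powers_le)
  finally show ?thesis by (simp add: mult.commute)
qed

text \<open>The witness is a maximiser of |P| on the grid of radius 2\<rho>.\<close>
lemma abs_peval_le_peval_at_torus_point:
  fixes c :: "(nat \<Rightarrow> nat) \<Rightarrow> complex"
  assumes "\<rho> > 0"
  shows "\<exists>x. (\<forall>k. norm (x k) = 2 * \<rho>) \<and>
    (\<forall>z. (\<forall>k<n. norm (z k) \<le> \<rho>) \<longrightarrow> norm (peval n d (abs_coeffs c) z) \<le> 2 ^ n * norm (peval n d c x))"
proof -
  let ?G = "PiE {..<n} (\<lambda>_. {..<Suc d})"
  define X where "X g = (\<lambda>k. of_real (2 * \<rho>) * unit_root (Suc d) ^ g k)" for g :: "nat \<Rightarrow> nat"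
  let ?f = "\<lambda>g. norm (peval n d c (X g))"
  have "finite ?G" "?G \<noteq> {}" by (auto intro: finite_PiE simp: PiE_eq_empty_iff)
  then have "Max (?f ` ?G) \<in> ?f ` ?G" by (intro Max_in) auto
  then obtain g0 where "g0 \<in> ?G" and "?f g0 = Max (?f ` ?G)" by auto
  with \<open>finite ?G\<close> have g0: "\<And>g. g \<in> ?G \<Longrightarrow> ?f g \<le> ?f g0"
    by simp
  show ?thesis
  proof (intro exI conjI allI impI)
    show "norm (X g0 k) = 2 * \<rho>" for k
      using \<open>\<rho> > 0\<close> by (simp add: X_def norm_mult norm_power)
    fix z :: "nat \<Rightarrow> complex" assume "\<forall>k<n. norm (z k) \<le> \<rho>"
    moreover have "norm (c \<nu>) * (2 * \<rho>) ^ (\<Sum>k<n. \<nu> k) \<le> norm (peval n d c (X g0))"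
      if "\<nu> \<in> multi_idx n d" for \<nu>
      using \<open>\<rho> > 0\<close> that g0 unfolding X_def by (intro norm_coeff_le_torus_grid_bound) auto
    ultimately show "norm (peval n d (abs_coeffs c) z) \<le> 2 ^ n * norm (peval n d c (X g0))"
      using norm_abs_peval_le by blast
  qed
qed

lemma ibounded_common_bound:
  fixes z :: "'i \<Rightarrow> nat \<Rightarrow> complex"
  assumes "\<forall>k<n. ibounded U (\<lambda>i. z i k)"
  obtains \<rho> where "\<rho> > 0" and "eventually (\<lambda>i. \<forall>k<n. norm (z i k) \<le> \<rho>) U"
proof -
  from assms obtain r where r: "\<And>k. k < n \<Longrightarrow> eventually (\<lambda>i. norm (z i k) \<le> r k) U"
    unfolding ibounded_def by metis
  define \<rho> where "\<rho> = 1 + (\<Sum>k<n. \<bar>r k\<bar>)"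
  have "\<rho> > 0" unfolding \<rho>_def by (simp add: add_pos_nonneg sum_nonneg)
  have r_le: "r k \<le> \<rho>" if "k < n" for k
  proof -
    have "\<bar>r k\<bar> \<le> (\<Sum>k<n. \<bar>r k\<bar>)" using that by (intro member_le_sum) auto
    then show ?thesis unfolding \<rho>_def by linarith
  qed
  have "\<forall>k\<in>{..<n}. eventually (\<lambda>i. norm (z i k) \<le> \<rho>) U"
  proof
    fix k assume "k \<in> {..<n}"
    then show "eventually (\<lambda>i. norm (z i k) \<le> \<rho>) U"
      by (intro eventually_mono[OF r]) (use r_le[of k] in auto)
  qed
  then have "eventually (\<lambda>i. \<forall>k\<in>{..<n}. norm (z i k) \<le> \<rho>) U"
    by (rule eventually_ball_finite[OF finite_lessThan])
  then have "eventually (\<lambda>i. \<forall>k<n. norm (z i k) \<le> \<rho>) U"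
    by (rule eventually_mono) simp
  with \<open>\<rho> > 0\<close> show ?thesis by (rule that)
qed

lemma ibounded_dominated:
  assumes "C \<ge> 0" and "eventually (\<lambda>i. norm (u i) \<le> C * norm (v i)) U" and "ibounded U v"
  shows "ibounded U u"
proof -
  from \<open>ibounded U v\<close> obtain M where "eventually (\<lambda>i. norm (v i) \<le> M) U"
    unfolding ibounded_def by blast
  with assms(2) have "eventually (\<lambda>i. norm (u i) \<le> C * M) U"
    by eventually_elim (use \<open>C \<ge> 0\<close> in \<open>meson mult_left_mono order_trans\<close>)
  then show ?thesis unfolding ibounded_def by blast
qed

lemma iinfinitesimal_dominated:
  assumes "C \<ge> 0" and "eventually (\<lambda>i. norm (u i) \<le> C * norm (v i)) U" and "iinfinitesimal U v"
  shows "iinfinitesimal U u"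
  unfolding iinfinitesimal_def
proof (intro allI impI)
  fix r :: real assume "r > 0"
  with \<open>C \<ge> 0\<close> \<open>iinfinitesimal U v\<close> have "eventually (\<lambda>i. norm (v i) < r / (C + 1)) U"
    unfolding iinfinitesimal_def by simp
  with assms(2) show "eventually (\<lambda>i. norm (u i) < r) U"
  proof eventually_elim
    case (elim i)
    have "C * norm (v i) \<le> (C + 1) * norm (v i)" by (simp add: distrib_right)
    also have "\<dots> < (C + 1) * (r / (C + 1))"
      using elim(2) \<open>C \<ge> 0\<close> by (intro mult_strict_left_mono) auto
    finally show ?case using elim(1) \<open>C \<ge> 0\<close> by simp
  qed
qed

lemma abs_peval_dominated_by_peval:
  fixes z :: "'i \<Rightarrow> nat \<Rightarrow> complex"
  assumes "\<forall>k<n. ibounded U (\<lambda>i. z i k)"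
  obtains x where "\<forall>k<n. ibounded U (\<lambda>i. x i k)"
    and "eventually (\<lambda>i. norm (peval n (d i) (abs_coeffs (a i)) (z i))
                         \<le> 2 ^ n * norm (peval n (d i) (a i) (x i))) U"
proof -
  obtain \<rho> where "\<rho> > 0" and z: "eventually (\<lambda>i. \<forall>k<n. norm (z i k) \<le> \<rho>) U"
    using ibounded_common_bound[OF assms] .
  have "\<forall>i. \<exists>x. (\<forall>k. norm (x k) = 2 * \<rho>) \<and> (\<forall>w. (\<forall>k<n. norm (w k) \<le> \<rho>) \<longrightarrow>
          norm (peval n (d i) (abs_coeffs (a i)) w) \<le> 2 ^ n * norm (peval n (d i) (a i) x))"
    using abs_peval_le_peval_at_torus_point[OF \<open>\<rho> > 0\<close>] by blast
  then obtain x where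
    x: "\<And>i k. norm (x i k) = 2 * \<rho>" and
    dom: "\<And>i w. \<forall>k<n. norm (w k) \<le> \<rho> \<Longrightarrow>
            norm (peval n (d i) (abs_coeffs (a i)) w) \<le> 2 ^ n * norm (peval n (d i) (a i) (x i))"
    by metis
  show ?thesis
  proof
    show "\<forall>k<n. ibounded U (\<lambda>i. x i k)"
      unfolding ibounded_def using x by (auto intro!: exI[of _ "2 * \<rho>"])
    show "eventually (\<lambda>i. norm (peval n (d i) (abs_coeffs (a i)) (z i))
                         \<le> 2 ^ n * norm (peval n (d i) (a i) (x i))) U"
      using z by (rule eventually_mono) (rule dom)
  qed
qed

lemma ipoly_property_iff_abs:
  assumes dominated: "\<And>u v C. C \<ge> 0 \<Longrightarrow> eventually (\<lambda>i. norm (u i) \<le> C * norm (v i)) U \<Longrightarrow>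
                         Q v \<Longrightarrow> Q u"
  shows "(\<forall>z. (\<forall>k<n. ibounded U (\<lambda>i. z i k)) \<longrightarrow> Q (\<lambda>i. peval n (d i) (a i) (z i))) \<longleftrightarrow>
         (\<forall>z. (\<forall>k<n. ibounded U (\<lambda>i. z i k)) \<longrightarrow> Q (\<lambda>i. peval n (d i) (abs_coeffs (a i)) (z i)))"
proof (intro iffI allI impI)
  fix z :: "'a \<Rightarrow> nat \<Rightarrow> complex"
  assume Q: "\<forall>z. (\<forall>k<n. ibounded U (\<lambda>i. z i k)) \<longrightarrow> Q (\<lambda>i. peval n (d i) (a i) (z i))"
    and z: "\<forall>k<n. ibounded U (\<lambda>i. z i k)"
  obtain x where x: "\<forall>k<n. ibounded U (\<lambda>i. x i k)"
    and dom: "eventually (\<lambda>i. norm (peval n (d i) (abs_coeffs (a i)) (z i))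
                              \<le> 2 ^ n * norm (peval n (d i) (a i) (x i))) U"
    using abs_peval_dominated_by_peval[OF z] .
  show "Q (\<lambda>i. peval n (d i) (abs_coeffs (a i)) (z i))"
    by (rule dominated[OF zero_le_power dom mp[OF spec[OF Q] x]]) simp
next
  fix z :: "'a \<Rightarrow> nat \<Rightarrow> complex"
  assume Q: "\<forall>z. (\<forall>k<n. ibounded U (\<lambda>i. z i k)) \<longrightarrow> Q (\<lambda>i. peval n (d i) (abs_coeffs (a i)) (z i))"
    and z: "\<forall>k<n. ibounded U (\<lambda>i. z i k)"
  from z have norm_z: "\<forall>k<n. ibounded U (\<lambda>i. of_real (norm (z i k)))"
    by (simp add: ibounded_def)
  have "eventually (\<lambda>i. norm (peval n (d i) (a i) (z i))
          \<le> 1 * norm (peval n (d i) (abs_coeffs (a i)) (\<lambda>k. of_real (norm (z i k))))) U"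
    by (simp add: norm_peval_le_abs_peval)
  then show "Q (\<lambda>i. peval n (d i) (a i) (z i))"
    by (rule dominated[OF zero_le_one _ mp[OF spec[OF Q] norm_z]])
qed

theorem proposition1p4p4:
  fixes U :: "'i filter" and n :: nat and d :: "'i \<Rightarrow> nat"
    and a :: "'i \<Rightarrow> (nat \<Rightarrow> nat) \<Rightarrow> complex"
  assumes "is_ultrafilter U" and "nonprincipal U"
  shows "(ipoly_bounded U n d a \<longleftrightarrow> ipoly_abs_bounded U n d a)
       \<and> (ipoly_infinitesimal U n d a \<longleftrightarrow> ipoly_abs_infinitesimal U n d a)"
proof
  show "ipoly_bounded U n d a \<longleftrightarrow> ipoly_abs_bounded U n d a"
    unfolding ipoly_abs_bounded_def ipoly_bounded_def
    by (rule ipoly_property_iff_abs) (rule ibounded_dominated)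
  show "ipoly_infinitesimal U n d a \<longleftrightarrow> ipoly_abs_infinitesimal U n d a"
    unfolding ipoly_abs_infinitesimal_def ipoly_infinitesimal_def
    by (rule ipoly_property_iff_abs) (rule iinfinitesimal_dominated)
qed

end
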